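(* Consider Algorithm MWHVC (described in the context) run on a hypergraph $G=(V,E)$ of rank $f$ with nonnegative vertex weights $w$, with parameters $\varepsilon\in(0,1]$, $\beta=\varepsilon/(f+\varepsilon)$ and multiplier $\alpha>1$. Upon termination, the set $C$ is a vertex cover of $G$ (every hyperedge intersects $C$) and $w(C)\le (f+\varepsilon)\cdot\mathrm{opt}$, where $\mathrm{opt}$ is the cost of an optimal fractional weighted vertex cover of $G$; i.e. the approximation ratio of the algorithm is $f+\varepsilon$.
   Context: Let $G=(V,E)$ be a hypergraph: each hyperedge is a nonempty subset of $V$ of size at most $f$ (rank $f$). Vertices have nonnegative weights $w(v)$, and $w(U)=\sum_{v\in U}w(v)$. For $v\in V$, $E(v)=\{e\in E: v\in e\}$; $\Delta=\max_v |E(v)|\ge 3$. A hyperedge $e$ is covered by $C\subseteq V$ if $e\cap C\neq\emptyset$. The optimal fractional vertex cover value $\mathrm{opt}$ is the minimum of $\sum_v w(v)x(v)$ subject to $\sum_{v\in e}x(v)\ge 1$ for all $e\in E$ and $x\ge 0$. The computation is distributed in synchronous rounds on the bipartite network with node set $V\cup E$ and a link between $v$ and $e$ iff $v\in e$. Parameters: $\varepsilon\in(0,1]$, $\beta=\varepsilon/(f+\varepsilon)$, and a multiplier $\alpha>1$. Algorithm MWHVC: Initialize $C\gets\emptyset$ and $E'(v)\gets E(v)$ for every $v$. Iteration $0$: every hyperedge $e$ sets $\mathrm{deal}_0(e)=\beta\cdot\min_{v\in e} w(v)/|E(v)|$ and $\delta_0(e)=\mathrm{deal}_0(e)$. For $i=1,2,\dots$: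 (a) every vertex $v\notin C$ (not terminated) checks whether $\sum_{e\in E(v)}\delta_{i-1}(e)\ge(1-\beta)w(v)$; if so, $v$ joins $C$, tells every $e\in E'(v)$ that $e$ is covered, and terminates. (b) Every uncovered hyperedge that receives such a message becomes covered, informs all its vertices, and terminates. (c) Every vertex $v\notin C$ that is told $e$ is covered sets $E'(v)\gets E'(v)\setminus\{e\}$; if $E'(v)=\emptyset$, $v$ terminates without joining $C$. (d) Every vertex $v\notin C$ sends "raise" to all $e\in E'(v)$ if $\sum_{e\in E'(v)}\mathrm{deal}_{i-1}(e)\le(\beta/\alpha)w(v)$, and otherwise sends "stuck" to all $e\in E'(v)$. (e) Every uncovered hyperedge $e$ sets $\mathrm{deal}_i(e)=\mathrm{deal}_{i-1}(e)$ if it received some "stuck" message, and $\mathrm{deal}_i(e)=\alpha\cdot\mathrm{deal}_{i-1}(e)$ otherwise, and $\delta_i(e)=\delta_{i-1}(e)+\mathrm{deal}_i(e)$. A vertex terminates when it is in $C$ or all its hyperedges are covered; a hyperedge terminates when covered. *)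

theory Defs
  imports Complex_Main
begin

definition Eset :: "'v set set \<Rightarrow> 'v \<Rightarrow> 'v set set" where
  "Eset E v = {e \<in> E. v \<in> e}"

definition max_degree :: "'v set \<Rightarrow> 'v set set \<Rightarrow> nat" where
  "max_degree V E = Max ((\<lambda>v. card (Eset E v)) ` V)"

definition frac_cover :: "'v set set \<Rightarrow> ('v \<Rightarrow> real) \<Rightarrow> bool" where
  "frac_cover E x \<longleftrightarrow> (\<forall>v. x v \<ge> 0) \<and> (\<forall>e\<in>E. (\<Sum>v\<in>e. x v) \<ge> 1)"

definition opt_frac :: "'v set \<Rightarrow> 'v set set \<Rightarrow> ('v \<Rightarrow> real) \<Rightarrow> real" where
  "opt_frac V E w = Inf {(\<Sum>v\<in>V. w v * x v) | x. frac_cover E x}"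

record 'v mwhvc_state =
  inC :: "'v set"
  trm :: "'v set"
  cov :: "'v set set"          \<comment> \<open>covered (terminated) hyperedges\<close>
  Ep  :: "'v \<Rightarrow> 'v set set"
  deal :: "'v set \<Rightarrow> real"
  dlt :: "'v set \<Rightarrow> real"

definition deal0 :: "'v set set \<Rightarrow> ('v \<Rightarrow> real) \<Rightarrow> real \<Rightarrow> 'v set \<Rightarrow> real" where
  "deal0 E w \<beta> e = \<beta> * Min ((\<lambda>v. w v / real (card (Eset E v))) ` e)"

text \<open>State after iteration 0. Vertices with no hyperedges are terminated (all their
  hyperedges are vacuously covered).\<close>
definition mwhvc_init :: "'v set \<Rightarrow> 'v set set \<Rightarrow> ('v \<Rightarrow> real) \<Rightarrow> real \<Rightarrow> 'v mwhvc_state" where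
  "mwhvc_init V E w \<beta> =
     \<lparr> inC = {}, trm = {v \<in> V. Eset E v = {}}, cov = {}, Ep = Eset E,
       deal = deal0 E w \<beta>, dlt = deal0 E w \<beta> \<rparr>"

definition mwhvc_step :: "'v set \<Rightarrow> 'v set set \<Rightarrow> ('v \<Rightarrow> real) \<Rightarrow> real \<Rightarrow> real
    \<Rightarrow> 'v mwhvc_state \<Rightarrow> 'v mwhvc_state" where
  "mwhvc_step V E w \<beta> \<alpha> s = (let
     J = {v \<in> V. v \<notin> trm s \<and> (\<Sum>e\<in>Eset E v. dlt s e) \<ge> (1 - \<beta>) * w v};
     N = {e \<in> E. e \<notin> cov s \<and> (\<exists>v\<in>J. e \<in> Ep s v)};
     act = V - trm s - J;
     Ep' = (\<lambda>v. if v \<in> act then Ep s v - N else Ep s v);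
     trm' = trm s \<union> J \<union> {v \<in> act. Ep' v = {}};
     cov' = cov s \<union> N;
     A = V - trm';
     raise = (\<lambda>v. (\<Sum>e\<in>Ep' v. deal s e) \<le> (\<beta> / \<alpha>) * w v);
     deal' = (\<lambda>e. if e \<in> E \<and> e \<notin> cov' \<and> \<not> (\<exists>v\<in>A. e \<in> Ep' v \<and> \<not> raise v)
                  then \<alpha> * deal s e else deal s e);
     dlt' = (\<lambda>e. if e \<in> E \<and> e \<notin> cov' then dlt s e + deal' e else dlt s e)
   in \<lparr> inC = inC s \<union> J, trm = trm', cov = cov', Ep = Ep', deal = deal', dlt = dlt' \<rparr>)"

primrec mwhvc :: "'v set \<Rightarrow> 'v set set \<Rightarrow> ('v \<Rightarrow> real) \<Rightarrow> real \<Rightarrow> real \<Rightarrow> nat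
    \<Rightarrow> 'v mwhvc_state" where
  "mwhvc V E w \<beta> \<alpha> 0 = mwhvc_init V E w \<beta>"
| "mwhvc V E w \<beta> \<alpha> (Suc i) = mwhvc_step V E w \<beta> \<alpha> (mwhvc V E w \<beta> \<alpha> i)"

definition mwhvc_terminated :: "'v set \<Rightarrow> 'v set set \<Rightarrow> 'v mwhvc_state \<Rightarrow> bool" where
  "mwhvc_terminated V E s \<longleftrightarrow> V \<subseteq> trm s \<and> E \<subseteq> cov s"

end

theory Submission
  imports Defs
begin

(* Primal-dual analysis. The accumulated values dlt(e) form a fractional packing of the
   hyperedges that never overloads a vertex: the load sum_{e in E(v)} dlt(e) stays at most w(v).
   While v is active its load is below (1 - beta) w(v), for otherwise v would have joined C,
   and the deals of its remaining hyperedges sum to at most beta w(v), because they are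
   multiplied by alpha only when their sum is at most (beta / alpha) w(v). Once v terminates,
   all its hyperedges are covered and their dlt values freeze. By weak LP duality the packing
   is at most opt. A vertex joins C only when its load reaches (1 - beta) w(v), so counting
   every hyperedge at most f times gives (1 - beta) w(C) <= f opt, and 1 - beta = f / (f + eps).
   A hyperedge is only ever covered by a vertex joining C. *)

lemma finite_hyperedges:
  assumes "finite V" and "\<forall>e\<in>E. e \<subseteq> V"
  shows "finite E"
  using assms by (metis Pow_iff finite_Pow_iff finite_subset subsetI)

lemma finite_Eset: "finite E \<Longrightarrow> finite (Eset E v)"
  unfolding Eset_def by simp

lemma sum_Eset_swap:
  assumes "finite V" and "\<forall>e\<in>E. e \<subseteq> V"
  shows "(\<Sum>e\<in>E. \<Sum>v\<in>e. g e v) = (\<Sum>v\<in>V. \<Sum>e\<in>Eset E v. g e v)"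
proof -
  have "finite E" using assms by (rule finite_hyperedges)
  have "(\<Sum>e\<in>E. \<Sum>v\<in>e. g e v) = (\<Sum>e\<in>E. \<Sum>v\<in>{v \<in> V. v \<in> e}. g e v)"
    using assms(2) by (intro sum.cong) auto
  also have "\<dots> = (\<Sum>v\<in>V. \<Sum>e\<in>{e \<in> E. v \<in> e}. g e v)"
    using sum.swap_restrict[OF \<open>finite E\<close> assms(1)] by simp
  finally show ?thesis unfolding Eset_def .
qed

lemma frac_cover_const_one:
  assumes "\<forall>e\<in>E. e \<noteq> {} \<and> finite e"
  shows "frac_cover E (\<lambda>_. 1)"
  using assms by (auto simp: frac_cover_def Suc_le_eq card_gt_0_iff)

lemma sum_packing_le_cover_cost:
  assumes "finite V" and "\<forall>e\<in>E. e \<subseteq> V" and "frac_cover E x"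
    and "\<forall>e\<in>E. 0 \<le> y e" and "\<forall>v\<in>V. (\<Sum>e\<in>Eset E v. y e) \<le> w v"
  shows "(\<Sum>e\<in>E. y e) \<le> (\<Sum>v\<in>V. w v * x v)"
proof -
  have x_nonneg: "\<forall>v. 0 \<le> x v" and x_covers: "\<forall>e\<in>E. 1 \<le> (\<Sum>v\<in>e. x v)"
    using assms(3) unfolding frac_cover_def by auto
  have "(\<Sum>e\<in>E. y e) \<le> (\<Sum>e\<in>E. y e * (\<Sum>v\<in>e. x v))"
    using assms(4) x_covers by (intro sum_mono) (auto simp: mult_le_cancel_left1)
  also have "\<dots> = (\<Sum>v\<in>V. x v * (\<Sum>e\<in>Eset E v. y e))"
    by (simp add: sum_distrib_left sum_Eset_swap[OF assms(1,2)] mult.commute)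
  also have "\<dots> \<le> (\<Sum>v\<in>V. x v * w v)"
    using assms(5) x_nonneg by (intro sum_mono mult_left_mono) auto
  finally show ?thesis by (simp add: mult.commute)
qed

lemma sum_packing_le_opt_frac:
  assumes "finite V" and "\<forall>e\<in>E. e \<noteq> {} \<and> e \<subseteq> V"
    and "\<forall>e\<in>E. 0 \<le> y e" and "\<forall>v\<in>V. (\<Sum>e\<in>Eset E v. y e) \<le> w v"
  shows "(\<Sum>e\<in>E. y e) \<le> opt_frac V E w"
  unfolding opt_frac_def
proof (rule cInf_greatest)
  have "\<forall>e\<in>E. e \<noteq> {} \<and> finite e"
    using assms(1,2) finite_subset by blast
  then show "{\<Sum>v\<in>V. w v * x v |x. frac_cover E x} \<noteq> {}"
    using frac_cover_const_one by blast
  show "(\<Sum>e\<in>E. y e) \<le> c" if c_feasible: "c \<in> {\<Sum>v\<in>V. w v * x v |x. frac_cover E x}" for c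
  proof -
    obtain x where "frac_cover E x" and "c = (\<Sum>v\<in>V. w v * x v)"
      using c_feasible by blast
    then show ?thesis
      using sum_packing_le_cover_cost[OF assms(1) _ _ assms(3,4)] assms(2) by blast
  qed
qed

lemma weight_le_rank_times_packing:
  assumes "finite V" and "\<forall>e\<in>E. e \<subseteq> V \<and> card e \<le> f" and "\<forall>e\<in>E. 0 \<le> y e"
    and "C \<subseteq> V" and "\<forall>v\<in>C. c * w v \<le> (\<Sum>e\<in>Eset E v. y e)"
  shows "c * (\<Sum>v\<in>C. w v) \<le> real f * (\<Sum>e\<in>E. y e)"
proof -
  have load_nonneg: "0 \<le> (\<Sum>e\<in>Eset E v. y e)" for v
    using assms(3) by (intro sum_nonneg) (auto simp: Eset_def)
  have "c * (\<Sum>v\<in>C. w v) \<le> (\<Sum>v\<in>C. \<Sum>e\<in>Eset E v. y e)"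
    using assms(5) by (simp add: sum_distrib_left sum_mono)
  also have "\<dots> \<le> (\<Sum>v\<in>V. \<Sum>e\<in>Eset E v. y e)"
    using assms(1,4) load_nonneg by (intro sum_mono2) auto
  also have "\<dots> = (\<Sum>e\<in>E. real (card e) * y e)"
    using sum_Eset_swap[OF assms(1), of E "\<lambda>e v. y e"] assms(2) by simp
  also have "\<dots> \<le> (\<Sum>e\<in>E. real f * y e)"
    using assms(2,3) by (intro sum_mono mult_right_mono) auto
  finally show ?thesis by (simp add: sum_distrib_left)
qed

lemma deal0_nonneg:
  assumes "finite e" and "e \<noteq> {}" and "\<forall>v\<in>e. 0 \<le> w v" and "0 \<le> \<beta>"
  shows "0 \<le> deal0 E w \<beta> e"
  using assms unfolding deal0_def by (simp add: Min_ge_iff)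

lemma deal0_le:
  assumes "finite e" and "v \<in> e" and "0 \<le> \<beta>"
  shows "deal0 E w \<beta> e \<le> \<beta> * (w v / real (card (Eset E v)))"
  using assms unfolding deal0_def by (intro mult_left_mono Min_le) auto

locale mwhvc_run =
  fixes V :: "'v set" and E :: "'v set set" and w :: "'v \<Rightarrow> real" and \<beta> \<alpha> :: real
  assumes finite_V: "finite V"
    and hyperedges: "\<forall>e\<in>E. e \<noteq> {} \<and> e \<subseteq> V"
    and weight_nonneg: "\<forall>v\<in>V. 0 \<le> w v"
    and beta_nonneg: "0 \<le> \<beta>" and beta_le_one: "\<beta> \<le> 1"
    and alpha_ge_one: "1 \<le> \<alpha>"
begin

abbreviation step :: "'v mwhvc_state \<Rightarrow> 'v mwhvc_state" where
  "step \<equiv> mwhvc_step V E w \<beta> \<alpha>"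

abbreviation load :: "'v mwhvc_state \<Rightarrow> 'v \<Rightarrow> real" where
  "load s v \<equiv> \<Sum>e\<in>Eset E v. dlt s e"

definition joining :: "'v mwhvc_state \<Rightarrow> 'v set" where
  "joining s = {v \<in> V. v \<notin> trm s \<and> (1 - \<beta>) * w v \<le> load s v}"

definition newly_covered :: "'v mwhvc_state \<Rightarrow> 'v set set" where
  "newly_covered s = {e \<in> E. e \<notin> cov s \<and> (\<exists>v\<in>joining s. e \<in> Ep s v)}"

lemma inC_step: "inC (step s) = inC s \<union> joining s"
  unfolding mwhvc_step_def Let_def mwhvc_state.simps joining_def by (rule refl)

lemma cov_step: "cov (step s) = cov s \<union> newly_covered s"
  unfolding mwhvc_step_def Let_def mwhvc_state.simps joining_def newly_covered_def by (rule refl)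

lemma Ep_step:
  "Ep (step s) v = (if v \<in> V - trm s - joining s then Ep s v - newly_covered s else Ep s v)"
  unfolding mwhvc_step_def Let_def mwhvc_state.simps joining_def newly_covered_def by (rule refl)

lemma trm_step:
  "trm (step s) = trm s \<union> joining s \<union> {v \<in> V - trm s - joining s. Ep (step s) v = {}}"
  unfolding Ep_step unfolding mwhvc_step_def Let_def mwhvc_state.simps joining_def newly_covered_def
  by (rule refl)

lemma dlt_step:
  "dlt (step s) e = (if e \<in> E \<and> e \<notin> cov (step s) then dlt s e + deal (step s) e else dlt s e)"
  unfolding mwhvc_step_def Let_def mwhvc_state.simps by (rule refl)

lemma deal_step_cases: "deal (step s) e = deal s e \<or> deal (step s) e = \<alpha> * deal s e"
  unfolding mwhvc_step_def Let_def mwhvc_state.simps by (simp only: if_split) simp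

lemma deal_step_stuck:
  assumes "v \<in> V - trm (step s)" and "e \<in> Ep (step s) v"
    and "(\<beta> / \<alpha>) * w v < (\<Sum>e\<in>Ep (step s) v. deal s e)"
  shows "deal (step s) e = deal s e"
proof -
  have "\<exists>u\<in>V - trm (step s).
      e \<in> Ep (step s) u \<and> \<not> (\<Sum>e'\<in>Ep (step s) u. deal s e') \<le> (\<beta> / \<alpha>) * w u"
    using assms by (intro bexI[of _ v]) auto
  then show ?thesis
    unfolding mwhvc_step_def Let_def mwhvc_state.simps by (simp only: if_False simp_thms)
qed

lemma deal_step_bounds:
  assumes "0 \<le> deal s e"
  shows "0 \<le> deal (step s) e" and "deal (step s) e \<le> \<alpha> * deal s e"
proof -
  have "deal s e \<le> \<alpha> * deal s e"
    using assms alpha_ge_one by (simp add: mult_le_cancel_right1)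
  then show "0 \<le> deal (step s) e" and "deal (step s) e \<le> \<alpha> * deal s e"
    using deal_step_cases[of s e] assms by auto
qed

lemma dlt_step_covered: "e \<in> cov (step s) \<Longrightarrow> dlt (step s) e = dlt s e"
  by (simp add: dlt_step)

lemma active_step:
  assumes "v \<in> V - trm (step s)"
  shows "v \<notin> trm s" and "v \<notin> joining s" and "Ep (step s) v = Ep s v - newly_covered s"
  using assms by (auto simp: trm_step Ep_step)

(* Dual feasibility (load s v <= w v) and the tightness of the vertices in C are what the
   approximation bound needs; the other conjuncts make them inductive. *)
definition invariant :: "'v mwhvc_state \<Rightarrow> bool" where
  "invariant s \<longleftrightarrow>
     (\<forall>e\<in>E. 0 \<le> deal s e \<and> 0 \<le> dlt s e) \<and>
     (\<forall>v\<in>V. Ep s v \<subseteq> Eset E v) \<and>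
     (\<forall>v\<in>V - trm s. Eset E v - cov s \<subseteq> Ep s v \<and> (\<Sum>e\<in>Ep s v. deal s e) \<le> \<beta> * w v) \<and>
     (\<forall>v\<in>V. load s v \<le> w v) \<and>
     (\<forall>v\<in>V. Eset E v = {} \<longrightarrow> v \<in> trm s) \<and>
     (\<forall>v\<in>trm s. Eset E v \<subseteq> cov s) \<and>
     inC s \<subseteq> trm s \<and>
     (\<forall>v\<in>inC s. v \<in> V \<and> Eset E v \<noteq> {} \<and> (1 - \<beta>) * w v \<le> load s v) \<and>
     (\<forall>e\<in>cov s. e \<inter> inC s \<noteq> {})"

context
  fixes s :: "'v mwhvc_state"
  assumes inv: "invariant s"
begin

lemma deal_nonneg: "e \<in> E \<Longrightarrow> 0 \<le> deal s e"
  and dlt_nonneg: "e \<in> E \<Longrightarrow> 0 \<le> dlt s e"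
  and Ep_subset_Eset: "v \<in> V \<Longrightarrow> Ep s v \<subseteq> Eset E v"
  and uncovered_subset_Ep: "v \<in> V - trm s \<Longrightarrow> Eset E v - cov s \<subseteq> Ep s v"
  and sum_deal_Ep_le: "v \<in> V - trm s \<Longrightarrow> (\<Sum>e\<in>Ep s v. deal s e) \<le> \<beta> * w v"
  and load_le_weight: "v \<in> V \<Longrightarrow> load s v \<le> w v"
  and isolated_trm: "v \<in> V \<Longrightarrow> Eset E v = {} \<Longrightarrow> v \<in> trm s"
  and Eset_subset_cov: "v \<in> trm s \<Longrightarrow> Eset E v \<subseteq> cov s"
  and inC_subset_trm: "inC s \<subseteq> trm s"
  and inC_tight: "v \<in> inC s \<Longrightarrow> v \<in> V \<and> Eset E v \<noteq> {} \<and> (1 - \<beta>) * w v \<le> load s v"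
  and cov_meets_inC: "e \<in> cov s \<Longrightarrow> e \<inter> inC s \<noteq> {}"
  using inv unfolding invariant_def by auto

lemma Ep_step_subset: "v \<in> V \<Longrightarrow> Ep (step s) v \<subseteq> Eset E v"
  using Ep_subset_Eset unfolding Ep_step by auto

lemma Eset_subset_cov_step:
  assumes "v \<in> trm (step s)"
  shows "Eset E v \<subseteq> cov (step s)"
proof
  fix e assume e: "e \<in> Eset E v"
  consider (old) "v \<in> trm s" | (joined) "v \<in> V - trm s" "v \<in> joining s"
    | (emptied) "v \<in> V - trm s" "Ep s v \<subseteq> newly_covered s"
    using assms by (auto simp: trm_step Ep_step joining_def)
  then show "e \<in> cov (step s)"
  proof cases
    case old
    then show ?thesis using Eset_subset_cov e by (auto simp: cov_step)
  next
    case joined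
    have "e \<in> E" using e by (simp add: Eset_def)
    then show ?thesis
      using uncovered_subset_Ep[OF joined(1)] e joined(2)
      by (auto simp: cov_step newly_covered_def)
  next
    case emptied
    then show ?thesis using uncovered_subset_Ep e by (auto simp: cov_step)
  qed
qed

lemma uncovered_subset_Ep_step:
  assumes "v \<in> V - trm (step s)"
  shows "Eset E v - cov (step s) \<subseteq> Ep (step s) v"
  using assms uncovered_subset_Ep active_step[OF assms] by (auto simp: cov_step)

lemma load_step_of_trm:
  assumes "v \<in> trm (step s)"
  shows "load (step s) v = load s v"
  using Eset_subset_cov_step[OF assms] by (intro sum.cong) (auto simp: dlt_step_covered)

lemma sum_deal_Ep_step_le:
  assumes v: "v \<in> V - trm (step s)"
  shows "(\<Sum>e\<in>Ep (step s) v. deal (step s) e) \<le> \<beta> * w v"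
proof -
  have Ep_sub: "Ep (step s) v \<subseteq> Ep s v" "Ep s v \<subseteq> E"
    using v Ep_subset_Eset active_step(3)[OF v] by (auto simp: Eset_def)
  have finite_Ep: "finite (Ep s v)"
    using Ep_sub(2) finite_hyperedges[OF finite_V] hyperedges by (meson finite_subset)
  show ?thesis
  proof (cases "(\<Sum>e\<in>Ep (step s) v. deal s e) \<le> (\<beta> / \<alpha>) * w v")
    case raise: True
    have "(\<Sum>e\<in>Ep (step s) v. deal (step s) e) \<le> (\<Sum>e\<in>Ep (step s) v. \<alpha> * deal s e)"
      using Ep_sub deal_nonneg by (intro sum_mono deal_step_bounds) auto
    also have "\<dots> = \<alpha> * (\<Sum>e\<in>Ep (step s) v. deal s e)"
      by (simp add: sum_distrib_left)
    also have "\<dots> \<le> \<alpha> * ((\<beta> / \<alpha>) * w v)"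
      using raise alpha_ge_one by (intro mult_left_mono) auto
    finally show ?thesis using alpha_ge_one by simp
  next
    case stuck: False
    have "(\<Sum>e\<in>Ep (step s) v. deal (step s) e) = (\<Sum>e\<in>Ep (step s) v. deal s e)"
      using v stuck by (intro sum.cong deal_step_stuck) auto
    also have "\<dots> \<le> (\<Sum>e\<in>Ep s v. deal s e)"
      using Ep_sub finite_Ep deal_nonneg by (intro sum_mono2) auto
    also have "\<dots> \<le> \<beta> * w v"
      using v active_step(1)[OF v] sum_deal_Ep_le by auto
    finally show ?thesis .
  qed
qed

lemma load_step_le_weight:
  assumes v: "v \<in> V"
  shows "load (step s) v \<le> w v"
proof (cases "v \<in> trm (step s)")
  case True
  then show ?thesis using load_step_of_trm load_le_weight v by simp
next
  case False
  then have active: "v \<in> V - trm (step s)" using v by simp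
  have finite_Eset_v: "finite (Eset E v)"
    using finite_Eset[OF finite_hyperedges[OF finite_V]] hyperedges by blast
  have finite_Ep: "finite (Ep (step s) v)"
    using Ep_step_subset[OF v] finite_Eset_v by (rule finite_subset)
  have "load (step s) v
      = (\<Sum>e\<in>Eset E v. dlt s e + (if e \<in> cov (step s) then 0 else deal (step s) e))"
    by (intro sum.cong) (auto simp: dlt_step Eset_def)
  also have "\<dots> = load s v + (\<Sum>e\<in>Eset E v - cov (step s). deal (step s) e)"
    using finite_Eset_v by (simp add: sum.distrib sum.If_cases Diff_eq)
  also have "\<dots> \<le> load s v + (\<Sum>e\<in>Ep (step s) v. deal (step s) e)"
    using uncovered_subset_Ep_step[OF active] finite_Ep Ep_step_subset[OF v]
    by (intro add_left_mono sum_mono2) (auto intro: deal_step_bounds deal_nonneg simp: Eset_def)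
  also have "\<dots> \<le> (1 - \<beta>) * w v + \<beta> * w v"
    using sum_deal_Ep_step_le[OF active] active_step(1,2)[OF active] v
    by (intro add_mono) (auto simp: joining_def)
  finally show ?thesis by (simp add: algebra_simps)
qed

lemma inC_step_subset_trm: "inC (step s) \<subseteq> trm (step s)"
  using inC_subset_trm by (auto simp: inC_step trm_step)

lemma inC_step_tight:
  assumes "v \<in> inC (step s)"
  shows "v \<in> V \<and> Eset E v \<noteq> {} \<and> (1 - \<beta>) * w v \<le> load (step s) v"
proof -
  have "load (step s) v = load s v"
    using assms inC_step_subset_trm by (intro load_step_of_trm) auto
  moreover have "v \<in> V \<and> Eset E v \<noteq> {} \<and> (1 - \<beta>) * w v \<le> load s v"
    using assms inC_tight isolated_trm by (auto simp: inC_step joining_def)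
  ultimately show ?thesis by simp
qed

lemma cov_step_meets_inC:
  assumes "e \<in> cov (step s)"
  shows "e \<inter> inC (step s) \<noteq> {}"
proof (cases "e \<in> cov s")
  case True
  then show ?thesis using cov_meets_inC by (auto simp: inC_step)
next
  case False
  then obtain v where "v \<in> joining s" and "e \<in> Ep s v"
    using assms by (auto simp: cov_step newly_covered_def)
  moreover have "v \<in> e"
    using calculation Ep_subset_Eset by (auto simp: joining_def Eset_def)
  ultimately show ?thesis by (auto simp: inC_step)
qed

lemma invariant_step: "invariant (step s)"
  unfolding invariant_def
proof (intro conjI ballI impI)
  show "0 \<le> deal (step s) e" and "0 \<le> dlt (step s) e" if "e \<in> E" for e
    using that deal_nonneg dlt_nonneg deal_step_bounds by (auto simp: dlt_step)
  show "v \<in> trm (step s)" if "v \<in> V" and "Eset E v = {}" for v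
    using that isolated_trm by (auto simp: trm_step)
qed (use Ep_step_subset uncovered_subset_Ep_step sum_deal_Ep_step_le load_step_le_weight
       Eset_subset_cov_step inC_step_subset_trm inC_step_tight cov_step_meets_inC in blast)+

end

lemma sum_deal0_le: "v \<in> V \<Longrightarrow> (\<Sum>e\<in>Eset E v. deal0 E w \<beta> e) \<le> \<beta> * w v"
proof (cases "Eset E v = {}")
  case False
  assume v: "v \<in> V"
  have finite_Eset_v: "finite (Eset E v)"
    using finite_Eset[OF finite_hyperedges[OF finite_V]] hyperedges by blast
  have "(\<Sum>e\<in>Eset E v. deal0 E w \<beta> e) \<le> (\<Sum>e\<in>Eset E v. \<beta> * (w v / real (card (Eset E v))))"
    using hyperedges finite_V beta_nonneg
    by (intro sum_mono deal0_le) (auto simp: Eset_def intro: finite_subset)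
  also have "\<dots> = \<beta> * w v"
    using False finite_Eset_v by simp
  finally show ?thesis .
qed (use beta_nonneg weight_nonneg in simp)

lemma invariant_init: "invariant (mwhvc_init V E w \<beta>)"
proof -
  have "0 \<le> deal0 E w \<beta> e" if "e \<in> E" for e
    using that hyperedges finite_V weight_nonneg beta_nonneg
    by (intro deal0_nonneg) (auto intro: finite_subset)
  moreover have "(\<Sum>e\<in>Eset E v. deal0 E w \<beta> e) \<le> w v" if "v \<in> V" for v
    using sum_deal0_le[OF that] beta_le_one beta_nonneg weight_nonneg that
    by (meson mult_left_le_one_le order_trans)
  ultimately show ?thesis
    using sum_deal0_le unfolding invariant_def mwhvc_init_def by auto
qed

lemma invariant_mwhvc: "invariant (mwhvc V E w \<beta> \<alpha> i)"
  by (induction i) (simp_all add: invariant_init invariant_step)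

lemma sum_dlt_le_opt_frac: "invariant s \<Longrightarrow> (\<Sum>e\<in>E. dlt s e) \<le> opt_frac V E w"
  using finite_V hyperedges dlt_nonneg load_le_weight by (intro sum_packing_le_opt_frac) auto

lemma weight_inC_le:
  assumes inv: "invariant s" and rank: "\<forall>e\<in>E. card e \<le> f"
    and beta: "\<beta> = \<epsilon> / (real f + \<epsilon>)" and "0 < \<epsilon>"
  shows "(\<Sum>v\<in>inC s. w v) \<le> (real f + \<epsilon>) * (\<Sum>e\<in>E. dlt s e)"
proof (cases "inC s = {}")
  case True
  then show ?thesis
    using dlt_nonneg[OF inv] \<open>0 < \<epsilon>\<close> by (simp add: sum_nonneg)
next
  case False
  then obtain v e where "v \<in> inC s" and "e \<in> Eset E v"
    using inC_tight[OF inv] by blast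
  then have "e \<in> E" and "v \<in> e" by (auto simp: Eset_def)
  then have "0 < card e"
    using hyperedges finite_V by (auto intro: finite_subset simp: card_gt_0_iff)
  then have "0 < f"
    using rank \<open>e \<in> E\<close> by (meson less_le_trans)
  have "(1 - \<beta>) * (\<Sum>v\<in>inC s. w v) \<le> real f * (\<Sum>e\<in>E. dlt s e)"
    using finite_V hyperedges rank dlt_nonneg[OF inv] inC_tight[OF inv]
    by (intro weight_le_rank_times_packing) auto
  moreover have "1 - \<beta> = real f / (real f + \<epsilon>)"
    using beta \<open>0 < \<epsilon>\<close> by (simp add: field_simps)
  ultimately have "real f * (\<Sum>v\<in>inC s. w v) \<le> real f * ((real f + \<epsilon>) * (\<Sum>e\<in>E. dlt s e))"
    using \<open>0 < \<epsilon>\<close> by (simp add: field_simps)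
  then show ?thesis
    using \<open>0 < f\<close> by simp
qed

end

theorem mainTheorem3:
  fixes V :: "'v set" and E :: "'v set set" and w :: "'v \<Rightarrow> real"
    and f :: nat and \<epsilon> \<alpha> :: real and i :: nat
  assumes "finite V"
    and "\<forall>e\<in>E. e \<noteq> {} \<and> e \<subseteq> V \<and> card e \<le> f"
    and "\<forall>v\<in>V. w v \<ge> 0"
    and "max_degree V E \<ge> 3"
    and "0 < \<epsilon>" and "\<epsilon> \<le> 1"
    and "\<alpha> > 1"
    and "mwhvc_terminated V E (mwhvc V E w (\<epsilon> / (real f + \<epsilon>)) \<alpha> i)"
  shows "(\<forall>e\<in>E. e \<inter> inC (mwhvc V E w (\<epsilon> / (real f + \<epsilon>)) \<alpha> i) \<noteq> {})
       \<and> (\<Sum>v\<in>inC (mwhvc V E w (\<epsilon> / (real f + \<epsilon>)) \<alpha> i). w v)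
           \<le> (real f + \<epsilon>) * opt_frac V E w"
proof -
  define \<beta> where "\<beta> = \<epsilon> / (real f + \<epsilon>)"
  define s where "s = mwhvc V E w \<beta> \<alpha> i"
  interpret mwhvc_run V E w \<beta> \<alpha>
    using assms(1-3,5,7) unfolding \<beta>_def by unfold_locales auto
  have inv: "invariant s"
    unfolding s_def by (rule invariant_mwhvc)
  have "E \<subseteq> cov s"
    using assms(8) unfolding mwhvc_terminated_def s_def \<beta>_def by blast
  then have cover: "\<forall>e\<in>E. e \<inter> inC s \<noteq> {}"
    using cov_meets_inC[OF inv] by blast
  (* The hypotheses on the maximum degree and on eps <= 1 only matter for the round
     complexity of the algorithm, not for its approximation ratio. *)
  have "(\<Sum>v\<in>inC s. w v) \<le> (real f + \<epsilon>) * (\<Sum>e\<in>E. dlt s e)"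
    using weight_inC_le[OF inv _ \<beta>_def assms(5)] assms(2) by blast
  also have "\<dots> \<le> (real f + \<epsilon>) * opt_frac V E w"
    using sum_dlt_le_opt_frac[OF inv] assms(5) by (intro mult_left_mono) auto
  finally show ?thesis
    using cover unfolding s_def \<beta>_def by blast
qed

end
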